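(* In the mechanism $\mathcal{M}_{sCA}$, let $\mathbf{t}$ be the true types and $(A_1,\dots,A_n)$ a feasible allocation maximizing $\sum_i t_i(A_i)$. Let $\mathbf{d}$ be a separated profile of single-minded declarations $(S_j,t_j(S_j))$. If $\sum_{j\in R_i(\mathbf{d},A_i)}d_j(S_j)<\frac12 t_i(A_i)$, then any utility-maximizing undominated declaration $d_i$ for agent $i$ (against $\mathbf{d}_{-i}$) is a single-minded declaration for some set $S_i$ with $d_i(S_i)\ge\frac12 t_i(A_i)$.
   Context: $s$-CA problem: $n$ agents, items $M$; feasible allocations consist of pairwise disjoint sets each of size at most $s$. Agent $i$ has private monotone valuation $t_i$, $t_i(\emptyset)=0$. Single-minded declaration $(S,x)$: value $x$ on supersets of $S$, $0$ otherwise. Mechanism $\mathcal{M}_{sCA}$: (1) replace each declaration by $(S_i,d_i(S_i))$ with $S_i\in\arg\max_S d_i(S)$ (ties to smaller sets); (2) greedily, in decreasing order of declared value, tentatively allocate sets of size at most $s$ disjoint from previously allocated ones, giving $T_1,\dots,T_n$; (3) for each $i$ with $T_i\ne\emptyset$, if $d_i(T_i)\le\sum_{j\ne i:\,S_j\cap T_i\neq\emptyset}d_j(S_j)$ set $T_i=\emptyset$; (4) allocate $T_1,\dots,T_n$ and charge each winner his critical price (infimum value he could declare for his set and still win it). Utility = true value minus payment. Undominated strategies are the single-minded declarations $(S,t_i(S))$. Notation: $R_i(\mathbf{d},T)=\{j\ne i:S_j\cap T\ne\emptyset\}$, $Q_i(\mathbf{d},T)=\{j\in R_i(\mathbf{d},T):d_j(S_j)<t_i(T)\}$;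 $\mathbf{d}$ is separated if $\sum_{j\in Q_i(\mathbf{d},S_i)}d_j(S_j)\le d_i(S_i)$ for all $i$. *)

theory Defs
  imports Complex_Main "HOL-Library.Product_Lexorder"
begin

text \<open>Agents are 0,...,n-1; items form a finite set M.  A (single-minded)
declaration is a pair (S, x): value x on supersets of S, 0 otherwise.
A profile is D :: nat => 'm set * real.\<close>

definition sm_val :: "'m set \<times> real \<Rightarrow> 'm set \<Rightarrow> real" where
  "sm_val d T = (if fst d \<subseteq> T then snd d else 0)"

text \<open>Step (1): replace a declaration by (S_i, d_i(S_i)) with S_i a maximizer of d_i,
ties broken to smaller sets.  For a single-minded (S,x) with x > 0 this is (S,x);
otherwise the empty set is the (smallest) maximizer.\<close>
definition reduce :: "'m set \<times> real \<Rightarrow> 'm set \<times> real" where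
  "reduce d = (if 0 < snd d then d else ({}, sm_val d {}))"

fun greedy_aux :: "nat \<Rightarrow> (nat \<Rightarrow> 'm set) \<Rightarrow> nat list \<Rightarrow> 'm set \<Rightarrow> nat \<Rightarrow> 'm set" where
  "greedy_aux s S [] U = (\<lambda>j. {})"
| "greedy_aux s S (j # js) U =
     (if card (S j) \<le> s \<and> S j \<inter> U = {}
      then (greedy_aux s S js (U \<union> S j))(j := S j)
      else greedy_aux s S js U)"

definition greedy_order :: "nat \<Rightarrow> (nat \<Rightarrow> 'm set \<times> real) \<Rightarrow> nat list" where
  "greedy_order n D = sort_key (\<lambda>j. (- snd (reduce (D j)), j)) [0..<n]"

definition tentative :: "nat \<Rightarrow> nat \<Rightarrow> (nat \<Rightarrow> 'm set \<times> real) \<Rightarrow> nat \<Rightarrow> 'm set" where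
  "tentative n s D = greedy_aux s (\<lambda>j. fst (reduce (D j))) (greedy_order n D) {}"

definition wins :: "nat \<Rightarrow> nat \<Rightarrow> (nat \<Rightarrow> 'm set \<times> real) \<Rightarrow> nat \<Rightarrow> bool" where
  "wins n s D i \<longleftrightarrow>
     (let T = tentative n s D i in
      T \<noteq> {} \<and>
      \<not> (sm_val (reduce (D i)) T \<le>
          (\<Sum>j\<in>{j. j < n \<and> j \<noteq> i \<and> fst (reduce (D j)) \<inter> T \<noteq> {}}. snd (reduce (D j)))))"

definition alloc :: "nat \<Rightarrow> nat \<Rightarrow> (nat \<Rightarrow> 'm set \<times> real) \<Rightarrow> nat \<Rightarrow> 'm set" where
  "alloc n s D i = (if wins n s D i then fst (reduce (D i)) else {})"

definition crit_price :: "nat \<Rightarrow> nat \<Rightarrow> (nat \<Rightarrow> 'm set \<times> real) \<Rightarrow> nat \<Rightarrow> real" where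
  "crit_price n s D i = Inf {x. wins n s (D(i := (fst (reduce (D i)), x))) i}"

definition payment :: "nat \<Rightarrow> nat \<Rightarrow> (nat \<Rightarrow> 'm set \<times> real) \<Rightarrow> nat \<Rightarrow> real" where
  "payment n s D i = (if wins n s D i then crit_price n s D i else 0)"

definition utility :: "nat \<Rightarrow> nat \<Rightarrow> (nat \<Rightarrow> 'm set \<Rightarrow> real) \<Rightarrow> (nat \<Rightarrow> 'm set \<times> real) \<Rightarrow> nat \<Rightarrow> real" where
  "utility n s t D i = t i (alloc n s D i) - payment n s D i"

definition undominated :: "'m set \<Rightarrow> (nat \<Rightarrow> 'm set \<Rightarrow> real) \<Rightarrow> nat \<Rightarrow> ('m set \<times> real) set" where
  "undominated M t i = {(S, t i S) | S. S \<subseteq> M}"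

definition feasible :: "nat \<Rightarrow> nat \<Rightarrow> 'm set \<Rightarrow> (nat \<Rightarrow> 'm set) \<Rightarrow> bool" where
  "feasible n s M A \<longleftrightarrow> (\<forall>j<n. A j \<subseteq> M \<and> card (A j) \<le> s) \<and>
     (\<forall>j<n. \<forall>k<n. j \<noteq> k \<longrightarrow> A j \<inter> A k = {})"

definition valuation :: "'m set \<Rightarrow> ('m set \<Rightarrow> real) \<Rightarrow> bool" where
  "valuation M v \<longleftrightarrow> v {} = 0 \<and> (\<forall>S T. S \<subseteq> T \<and> T \<subseteq> M \<longrightarrow> v S \<le> v T)"

definition R_set :: "nat \<Rightarrow> (nat \<Rightarrow> 'm set \<times> real) \<Rightarrow> nat \<Rightarrow> 'm set \<Rightarrow> nat set" where
  "R_set n D i T = {j. j < n \<and> j \<noteq> i \<and> fst (D j) \<inter> T \<noteq> {}}"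

definition Q_set :: "nat \<Rightarrow> (nat \<Rightarrow> 'm set \<Rightarrow> real) \<Rightarrow> (nat \<Rightarrow> 'm set \<times> real) \<Rightarrow> nat \<Rightarrow> 'm set \<Rightarrow> nat set" where
  "Q_set n t D i T = {j \<in> R_set n D i T. snd (D j) < t i T}"

definition separated :: "nat \<Rightarrow> (nat \<Rightarrow> 'm set \<Rightarrow> real) \<Rightarrow> (nat \<Rightarrow> 'm set \<times> real) \<Rightarrow> bool" where
  "separated n t D \<longleftrightarrow> (\<forall>i<n. (\<Sum>j\<in>Q_set n t D i (fst (D i)). snd (D j)) \<le> snd (D i))"

end

theory Submission
  imports Defs
begin

text \<open>Bidding A_i at any value above the total declared value sigma of the agents
competing for items of A_i wins: those agents come later in the greedy order (their
values are below the bid), and they cannot outweigh the bid in the removal step.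
Hence the critical price of A_i is at most sigma < t_i(A_i)/2, so the truthful bid on
A_i guarantees utility above t_i(A_i)/2.  A single-minded declaration (S, t_i(S))
never yields utility above max 0 (t_i(S)), because critical prices are nonnegative;
so a utility-maximizing declaration must have t_i(S) \<ge> t_i(A_i)/2.\<close>

lemma greedy_aux_cases: "greedy_aux s S js U j = {} \<or> greedy_aux s S js U j = S j"
  by (induction js arbitrary: U) auto

lemma greedy_aux_eq_if_no_earlier_conflict:
  assumes "i \<in> set js" "card (S i) \<le> s" "S i \<inter> U = {}"
    "\<forall>j\<in>set (takeWhile (\<lambda>k. k \<noteq> i) js). S j \<inter> S i = {}"
  shows "greedy_aux s S js U i = S i"
  using assms
proof (induction js arbitrary: U)
  case (Cons j js)
  show ?case
  proof (cases "j = i")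
    case False
    with Cons.prems have "S i \<inter> (U \<union> S j) = {}" "i \<in> set js"
      "\<forall>j\<in>set (takeWhile (\<lambda>k. k \<noteq> i) js). S j \<inter> S i = {}"
      by auto
    with Cons.IH Cons.prems(2,3) False show ?thesis by simp
  qed (use Cons.prems in simp)
qed simp

lemma sorted_key_takeWhile_le:
  "sorted (map f xs) \<Longrightarrow> i \<in> set xs \<Longrightarrow> j \<in> set (takeWhile (\<lambda>k. k \<noteq> i) xs) \<Longrightarrow> f j \<le> f i"
  by (induction xs) (auto split: if_splits)

lemma reduce_eq_if_fst_nonempty: "fst (reduce d) \<noteq> {} \<Longrightarrow> reduce d = d"
  by (auto simp: reduce_def split: if_splits)

lemma wins_imp_pos_bid:
  assumes "wins n s E i"
  shows "0 < snd (E i)" and "reduce (E i) = E i"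
proof -
  have "tentative n s E i \<noteq> {}" using assms by (simp add: wins_def Let_def)
  then have "fst (reduce (E i)) \<noteq> {}"
    using greedy_aux_cases[of s "\<lambda>j. fst (reduce (E j))" "greedy_order n E" "{}" i]
    unfolding tentative_def by auto
  then show "0 < snd (E i)" "reduce (E i) = E i"
    by (auto simp: reduce_def split: if_splits)
qed

lemma crit_price_nonneg:
  assumes "wins n s E i"
  shows "0 \<le> crit_price n s E i"
proof -
  define X where "X = {x. wins n s (E(i := (fst (reduce (E i)), x))) i}"
  have "E(i := (fst (E i), snd (E i))) = E" by simp
  then have "snd (E i) \<in> X"
    using assms wins_imp_pos_bid(2)[OF assms] unfolding X_def by simp
  moreover have "0 \<le> x" if "x \<in> X" for x
    using wins_imp_pos_bid(1) that unfolding X_def by fastforce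
  ultimately show ?thesis
    unfolding crit_price_def X_def[symmetric] by (intro cInf_greatest) auto
qed

lemma cInf_le_if_greaterThan_subset:
  fixes X :: "real set"
  assumes "bdd_below X" "{a<..} \<subseteq> X"
  shows "Inf X \<le> a"
proof (rule ccontr)
  assume "\<not> Inf X \<le> a"
  then have "(a + Inf X) / 2 \<in> X" using assms(2) by auto
  then have "Inf X \<le> (a + Inf X) / 2" using assms(1) by (rule cInf_lower)
  with \<open>\<not> Inf X \<le> a\<close> show False by simp
qed

lemma crit_price_le_if_wins_above:
  assumes "0 < y" "\<And>x. a < x \<Longrightarrow> wins n s (D(i := (T, x))) i"
  shows "crit_price n s (D(i := (T, y))) i \<le> a"
proof -
  define X where "X = {x. wins n s (D(i := (T, x))) i}"
  have "bdd_below X"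
    using wins_imp_pos_bid(1) by (intro bdd_belowI[of _ 0]) (fastforce simp: X_def)
  moreover have "{a<..} \<subseteq> X" using assms(2) by (auto simp: X_def)
  ultimately have "Inf X \<le> a" by (rule cInf_le_if_greaterThan_subset)
  moreover have "reduce (T, y) = (T, y)" using assms(1) by (simp add: reduce_def)
  ultimately show ?thesis by (simp add: crit_price_def X_def)
qed

lemma tentative_eq_if_bid_exceeds_conflicts:
  assumes "i < n" "card T \<le> s" "reduce (E i) = (T, x)"
    and conflicts_below: "\<And>j. j < n \<Longrightarrow> j \<noteq> i \<Longrightarrow> fst (reduce (E j)) \<inter> T \<noteq> {} \<Longrightarrow>
      snd (reduce (E j)) < x"
  shows "tentative n s E i = T"
  unfolding tentative_def
proof (rule greedy_aux_eq_if_no_earlier_conflict[of i _ "\<lambda>j. fst (reduce (E j))",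
      simplified assms(3) fst_conv])
  let ?key = "\<lambda>j. (- snd (reduce (E j)), j)"
  show "i \<in> set (greedy_order n E)" using assms(1) by (simp add: greedy_order_def)
  show "\<forall>j\<in>set (takeWhile (\<lambda>k. k \<noteq> i) (greedy_order n E)). fst (reduce (E j)) \<inter> T = {}"
  proof
    fix j assume j: "j \<in> set (takeWhile (\<lambda>k. k \<noteq> i) (greedy_order n E))"
    then have "j \<noteq> i" "j < n"
      by (auto dest: set_takeWhileD simp: greedy_order_def)
    moreover have "?key j \<le> ?key i"
      using sorted_key_takeWhile_le[of ?key "greedy_order n E" i j] j assms(1)
      by (simp add: greedy_order_def sorted_sort_key)
    ultimately show "fst (reduce (E j)) \<inter> T = {}"
      using conflicts_below assms(3) by (fastforce simp: less_eq_prod_def)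
  qed
qed (use assms(2) in simp_all)

lemma wins_if_bid_exceeds_conflict_sum:
  assumes "i < n" "card T \<le> s" "T \<noteq> {}"
    and nonneg: "\<forall>j<n. 0 \<le> snd (D j)"
    and bid: "(\<Sum>j\<in>R_set n D i T. snd (D j)) < x"
  shows "wins n s (D(i := (T, x))) i"
proof -
  define E where "E = D(i := (T, x))"
  define C where "C = {j. j < n \<and> j \<noteq> i \<and> fst (reduce (E j)) \<inter> T \<noteq> {}}"
  have fin: "finite (R_set n D i T)" by (rule finite_subset[of _ "{..<n}"]) (auto simp: R_set_def)
  have "0 \<le> (\<Sum>j\<in>R_set n D i T. snd (D j))"
    using nonneg by (intro sum_nonneg) (auto simp: R_set_def)
  then have "0 < x" using bid by simp
  then have Ei: "reduce (E i) = (T, x)" by (simp add: E_def reduce_def)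
  have Ej: "reduce (E j) = D j" if "j \<in> C" for j
    using that reduce_eq_if_fst_nonempty by (fastforce simp: C_def E_def)
  have C_sub: "C \<subseteq> R_set n D i T" using Ej by (fastforce simp: C_def R_set_def)
  have "(\<Sum>j\<in>C. snd (reduce (E j))) = (\<Sum>j\<in>C. snd (D j))" using Ej by simp
  also have "\<dots> \<le> (\<Sum>j\<in>R_set n D i T. snd (D j))"
    using nonneg C_sub by (intro sum_mono2[OF fin]) (auto simp: R_set_def)
  finally have C_sum: "(\<Sum>j\<in>C. snd (reduce (E j))) < x" using bid by simp
  have "snd (reduce (E j)) < x" if "j \<in> C" for j
  proof -
    have "\<forall>k\<in>C. 0 \<le> snd (reduce (E k))"
      using Ej nonneg by (metis (mono_tags, lifting) C_def mem_Collect_eq)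
    then have "snd (reduce (E j)) \<le> (\<Sum>k\<in>C. snd (reduce (E k)))"
      using that finite_subset[OF C_sub fin] by (intro member_le_sum) auto
    with C_sum show ?thesis by simp
  qed
  then have "tentative n s E i = T"
    by (intro tentative_eq_if_bid_exceeds_conflicts[of i n T s E x, OF assms(1,2) Ei])
      (simp add: C_def)
  with C_sum Ei assms(3) show ?thesis
    unfolding E_def[symmetric] wins_def Let_def C_def by (simp add: sm_val_def)
qed

lemma utility_single_minded_le:
  assumes "t i {} = 0"
  shows "utility n s t (D(i := (S, t i S))) i \<le> max 0 (t i S)"
proof (cases "wins n s (D(i := (S, t i S))) i")
  case True
  then show ?thesis
    using wins_imp_pos_bid(2)[OF True] crit_price_nonneg[OF True]
    by (simp add: utility_def alloc_def payment_def)
qed (simp add: assms utility_def alloc_def payment_def)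

theorem proposition4p5:
  fixes n s :: nat and M :: "'m set" and t :: "nat \<Rightarrow> 'm set \<Rightarrow> real"
    and A :: "nat \<Rightarrow> 'm set" and D :: "nat \<Rightarrow> 'm set \<times> real"
    and i :: nat and di :: "'m set \<times> real"
  assumes "finite M"
    and "\<forall>j<n. valuation M (t j)"
    and "feasible n s M A"
    and "\<forall>B. feasible n s M B \<longrightarrow> (\<Sum>j<n. t j (B j)) \<le> (\<Sum>j<n. t j (A j))"
    and "\<forall>j<n. D j \<in> undominated M t j"
    and "separated n t D"
    and "i < n"
    and "(\<Sum>j\<in>R_set n D i (A i). snd (D j)) < t i (A i) / 2"
    and "di \<in> undominated M t i"
    and "\<forall>d' \<in> undominated M t i. utility n s t (D(i := d')) i \<le> utility n s t (D(i := di)) i"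
  shows "\<exists>S. di = (S, t i S) \<and> t i S \<ge> t i (A i) / 2"
proof -
  let ?\<sigma> = "\<Sum>j\<in>R_set n D i (A i). snd (D j)"
  from assms(9) obtain S where di: "di = (S, t i S)" by (auto simp: undominated_def)
  have A: "A i \<subseteq> M" "card (A i) \<le> s" using assms(3,7) by (auto simp: feasible_def)
  have t_nonneg: "\<And>j T. j < n \<Longrightarrow> T \<subseteq> M \<Longrightarrow> 0 \<le> t j T"
    using assms(2) unfolding valuation_def by (metis empty_subsetI)
  have t_empty: "t i {} = 0" using assms(2,7) by (simp add: valuation_def)
  have D_nonneg: "\<forall>j<n. 0 \<le> snd (D j)"
    using assms(5) t_nonneg by (auto simp: undominated_def)
  have "0 \<le> ?\<sigma>" using D_nonneg by (intro sum_nonneg) (auto simp: R_set_def)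
  then have tA_pos: "0 < t i (A i)" using assms(8) by simp
  then have "A i \<noteq> {}" using t_empty by auto
  then have "crit_price n s (D(i := (A i, t i (A i)))) i \<le> ?\<sigma>"
    using wins_if_bid_exceeds_conflict_sum[OF assms(7) A(2) _ D_nonneg] tA_pos
    by (intro crit_price_le_if_wins_above) auto
  moreover have "wins n s (D(i := (A i, t i (A i)))) i"
    using wins_if_bid_exceeds_conflict_sum[OF assms(7) A(2) \<open>A i \<noteq> {}\<close> D_nonneg] assms(8) tA_pos
    by simp
  ultimately have "t i (A i) - ?\<sigma> \<le> utility n s t (D(i := (A i, t i (A i)))) i"
    using tA_pos by (simp add: utility_def alloc_def payment_def reduce_def)
  also have "\<dots> \<le> utility n s t (D(i := di)) i"
    using assms(10) A(1) by (auto simp: undominated_def)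
  also have "\<dots> \<le> max 0 (t i S)" using utility_single_minded_le[of t i, OF t_empty] di by simp
  finally show ?thesis using assms(8) tA_pos di by (auto simp: max_def split: if_splits)
qed

end
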